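(* For $\lambda\in\mathbb{C}$ (not an eigenvalue of $D_{1,1}$), we can express \[ p_N(-\tau_i;\ \lambda)=\frac{r_i(\lambda)}{s(\lambda)},\quad i=1,\ldots,m, \] where $s$ is a monic polynomial of degree $N$ and $r_i$, $i=1,\ldots,m$, are polynomials of degree smaller than or equal to $N$. Furthermore, \[ s(\lambda)=\det(\lambda I-D_{1,1}) \] and \[ \left[\begin{array}{c} p_N(\theta_{N,-N};\ \lambda)\\ \vdots\\ p_N(\theta_{N,-1};\ \lambda)\end{array}\right]=(\lambda I-D_{1,1})^{-1}D_{1,2}. \]
   Context: Let $\tau_1,\ldots,\tau_m>0$ be delays and $\tau_{\max}=\max_i\tau_i$. Given a positive integer $N$, let $\theta_{N,i}$, $i=-N,\ldots,0$, be $N+1$ distinct points in $[-\tau_{\max},0]$ with $\theta_{N,0}=0$. Let $l_{N,k}$, $k\in\{-N,\ldots,0\}$, be the Lagrange polynomials of degree $N$ on these points ($l_{N,k}(\theta_{N,i})=1$ if $i=k$, $0$ otherwise). Let $D$ be the $(N+1)\times(N+1)$ differentiation matrix with entries $d_{i,k}=l'_{N,k}(\theta_{N,i})$, $i,k\in\{-N,\ldots,0\}$, partitioned as $D=\begin{bmatrix}D_{1,1}&D_{1,2}\\ D_{2,1}&D_{2,2}\end{bmatrix}$, where $D_{1,1}$ is the $N\times N$ block with $i,k\in\{-N,\ldots,-1\}$ and $D_{1,2}$ is the $N\times 1$ column with $i\in\{-N,\ldots,-1\}$, $k=0$. For $\lambda\in\mathbb{C}$, $p_N(\cdot;\lambda)$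 denotes the polynomial of degree $N$ satisfying $p_N(0;\lambda)=1$ and $p_N'(\theta_{N,i};\lambda)=\lambda\, p_N(\theta_{N,i};\lambda)$ for $i\in\{-N,\ldots,-1\}$ (a collocation approximation of $e^{\lambda t}$). *)

theory Defs
  imports "HOL-Computational_Algebra.Polynomial" "Jordan_Normal_Form.Jordan_Normal_Form"
    "Jordan_Normal_Form.Gauss_Jordan_Elimination"
begin

definition lagrange_basis :: "(int \<Rightarrow> real) \<Rightarrow> nat \<Rightarrow> int \<Rightarrow> real poly" where
  "lagrange_basis \<theta> N k =
     (\<Prod>j\<in>{-int N..0} - {k}. Polynomial.smult (1 / (\<theta> k - \<theta> j)) [:- \<theta> j, 1:])"

definition diff_entry :: "(int \<Rightarrow> real) \<Rightarrow> nat \<Rightarrow> int \<Rightarrow> int \<Rightarrow> real" where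
  "diff_entry \<theta> N i k = poly (pderiv (lagrange_basis \<theta> N k)) (\<theta> i)"

text \<open>Block D_{1,1}: row r, column c (0-based) correspond to i = r - N, k = c - N.\<close>
definition D11 :: "(int \<Rightarrow> real) \<Rightarrow> nat \<Rightarrow> real mat" where
  "D11 \<theta> N = mat N N (\<lambda>(r, c). diff_entry \<theta> N (int r - int N) (int c - int N))"

definition D12 :: "(int \<Rightarrow> real) \<Rightarrow> nat \<Rightarrow> real vec" where
  "D12 \<theta> N = vec N (\<lambda>r. diff_entry \<theta> N (int r - int N) 0)"

definition is_collocation_poly :: "(int \<Rightarrow> real) \<Rightarrow> nat \<Rightarrow> complex \<Rightarrow> complex poly \<Rightarrow> bool" where
  "is_collocation_poly \<theta> N lam p \<longleftrightarrow>
     degree p \<le> N \<and> poly p 0 = 1 \<and>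
     (\<forall>i\<in>{-int N..-1}. poly (pderiv p) (of_real (\<theta> i)) = lam * poly p (of_real (\<theta> i)))"

end

theory Submission
  imports Defs
begin

text \<open>
  Since \<open>p(\<theta>\<^sub>0) = p(0) = 1\<close> and a polynomial of degree at most N is its own Lagrange
  interpolant on the N + 1 nodes, the collocation polynomial is determined by its values
  P at the nodes \<open>\<theta>\<^sub>-\<^sub>N, ..., \<theta>\<^sub>-\<^sub>1\<close>, and differentiating the interpolation formula gives
  \<open>p'(\<theta>\<^sub>i) = \<Sum>\<^sub>k d\<^sub>i\<^sub>k p(\<theta>\<^sub>k)\<close>.  Hence the collocation conditions are exactly the linear
  system \<open>(\<lambda>I - D\<^sub>1\<^sub>1) P = D\<^sub>1\<^sub>2\<close>.  If \<open>\<lambda>\<close> is not an eigenvalue of \<open>D\<^sub>1\<^sub>1\<close>, the system has the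
  unique solution \<open>(\<lambda>I - D\<^sub>1\<^sub>1)\<^sup>-\<^sup>1 D\<^sub>1\<^sub>2\<close>, and by Cramer's rule each \<open>P\<^sub>k\<close> is a polynomial in \<open>\<lambda>\<close>
  of degree at most N divided by \<open>s(\<lambda>) = det(\<lambda>I - D\<^sub>1\<^sub>1)\<close>.  Evaluating the interpolation
  formula at \<open>-\<tau>\<^sub>i\<close> then exhibits \<open>p(-\<tau>\<^sub>i)\<close> as \<open>r\<^sub>i(\<lambda>) / s(\<lambda>)\<close>.
\<close>

lemma poly_lagrange_basis_node:
  assumes inj: "inj_on \<theta> {-int N..0}" and j: "j \<in> {-int N..0}" and k: "k \<in> {-int N..0}"
  shows "poly (lagrange_basis \<theta> N k) (\<theta> j) = (if j = k then 1 else 0)"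
proof (cases "j = k")
  case True
  have "poly (Polynomial.smult (1 / (\<theta> k - \<theta> i)) [:- \<theta> i, 1:]) (\<theta> k) = 1"
    if "i \<in> {-int N..0} - {k}" for i
  proof -
    from that have "\<theta> k \<noteq> \<theta> i" using inj k by (metis DiffE inj_onD singletonI)
    then show ?thesis by (simp add: diff_divide_distrib[symmetric])
  qed
  then show ?thesis
    using True unfolding lagrange_basis_def poly_prod by simp
next
  case False
  have "poly (lagrange_basis \<theta> N k) (\<theta> j) = 0"
    unfolding lagrange_basis_def poly_prod by (rule prod_zero) (use j False in auto)
  with False show ?thesis by simp
qed

lemma degree_lagrange_basis:
  assumes "k \<in> {-int N..0}"
  shows "degree (lagrange_basis \<theta> N k) \<le> N"
proof -
  have "degree (lagrange_basis \<theta> N k)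
      \<le> (\<Sum>i\<in>{-int N..0} - {k}. degree (Polynomial.smult (1 / (\<theta> k - \<theta> i)) [:- \<theta> i, 1:]))"
    unfolding lagrange_basis_def by (rule degree_prod_sum_le[unfolded o_def]) simp
  also have "\<dots> \<le> (\<Sum>i\<in>{-int N..0} - {k}. 1)"
    by (intro sum_mono order_trans[OF degree_smult_le]) simp
  also have "\<dots> = N"
    using assms by simp
  finally show ?thesis .
qed

definition complex_lagrange_basis :: "(int \<Rightarrow> real) \<Rightarrow> nat \<Rightarrow> int \<Rightarrow> complex poly" where
  "complex_lagrange_basis \<theta> N k = map_poly of_real (lagrange_basis \<theta> N k)"

lemma degree_complex_lagrange_basis:
  "k \<in> {-int N..0} \<Longrightarrow> degree (complex_lagrange_basis \<theta> N k) \<le> N"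
  unfolding complex_lagrange_basis_def
  by (metis degree_lagrange_basis degree_map_poly_le order_trans)

lemma poly_complex_lagrange_basis_of_real:
  "poly (complex_lagrange_basis \<theta> N k) (of_real x) = of_real (poly (lagrange_basis \<theta> N k) x)"
  unfolding complex_lagrange_basis_def by (rule of_real_hom.poly_map_poly)

lemma poly_eqI_on_nodes:
  fixes p q :: "complex poly"
  assumes inj: "inj_on \<theta> {-int N..0}" and "degree p \<le> N" and "degree q \<le> N"
    and "\<And>k. k \<in> {-int N..0} \<Longrightarrow> poly p (of_real (\<theta> k)) = poly q (of_real (\<theta> k))"
  shows "p = q"
proof -
  have "inj_on (\<lambda>k. complex_of_real (\<theta> k)) {-int N..0}"
    using inj by (auto simp: inj_on_def)
  then have "card ((\<lambda>k. complex_of_real (\<theta> k)) ` {-int N..0}) = Suc N"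
    by (simp add: card_image)
  then show ?thesis
    by (intro poly_eqI_degree[of "(\<lambda>k. of_real (\<theta> k)) ` {-int N..0}"]) (use assms in auto)
qed

lemma lagrange_expansion:
  fixes p :: "complex poly"
  assumes inj: "inj_on \<theta> {-int N..0}" and deg: "degree p \<le> N"
  shows "p = (\<Sum>k\<in>{-int N..0}. Polynomial.smult (poly p (of_real (\<theta> k))) (complex_lagrange_basis \<theta> N k))"
    (is "p = ?q")
proof (rule poly_eqI_on_nodes[OF inj deg])
  show "degree ?q \<le> N"
    by (intro degree_sum_le order_trans[OF degree_smult_le] degree_complex_lagrange_basis) auto
  fix j assume j: "j \<in> {-int N..0}"
  have "poly ?q (of_real (\<theta> j)) = (\<Sum>k\<in>{-int N..0}. if k = j then poly p (of_real (\<theta> j)) else 0)"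
    unfolding poly_sum
    by (intro sum.cong) (auto simp: poly_complex_lagrange_basis_of_real poly_lagrange_basis_node[OF inj j])
  also have "\<dots> = poly p (of_real (\<theta> j))"
    using j by simp
  finally show "poly p (of_real (\<theta> j)) = poly ?q (of_real (\<theta> j))"
    by simp
qed

lemma poly_pderiv_at_node:
  fixes p :: "complex poly"
  assumes "inj_on \<theta> {-int N..0}" and "degree p \<le> N"
  shows "poly (pderiv p) (of_real (\<theta> i))
    = (\<Sum>k\<in>{-int N..0}. poly p (of_real (\<theta> k)) * of_real (diff_entry \<theta> N i k))"
proof -
  have "pderiv p = (\<Sum>k\<in>{-int N..0}. Polynomial.smult (poly p (of_real (\<theta> k))) (pderiv (complex_lagrange_basis \<theta> N k)))"
    by (subst lagrange_expansion[OF assms]) (simp add: pderiv_sum pderiv_smult)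
  then show ?thesis
    by (simp add: poly_sum diff_entry_def complex_lagrange_basis_def
        of_real_hom.map_poly_pderiv[symmetric])
qed

lemma interior_nodes_eq_image:
  "{-int N..-1} = (\<lambda>j. int j - int N) ` {..<N}"
proof -
  have "k \<in> (\<lambda>j. int j - int N) ` {..<N}" if "k \<in> {-int N..-1}" for k
    using that by (intro image_eqI[of _ _ "nat (k + int N)"]) auto
  then show ?thesis by force
qed

lemma ball_interior_nodes:
  "(\<forall>i\<in>{-int N..-1}. P i) \<longleftrightarrow> (\<forall>j<N. P (int j - int N))"
  unfolding interior_nodes_eq_image by auto

lemma sum_nodes_split:
  "(\<Sum>k\<in>{-int N..0}. f k) = (\<Sum>j<N. f (int j - int N)) + f 0"
proof -
  have "{-int N..0} = insert 0 ((\<lambda>j. int j - int N) ` {..<N})"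
    using interior_nodes_eq_image[of N] by force
  moreover have "inj_on (\<lambda>j. int j - int N) {..<N}"
    by (auto simp: inj_on_def)
  ultimately show ?thesis
    by (simp add: sum.reindex image_iff add.commute)
qed

lemma smult_one_mult_mat_vec:
  "(x :: 'a::comm_ring_1 vec) \<in> carrier_vec n \<Longrightarrow> (c \<cdot>\<^sub>m 1\<^sub>m n) *\<^sub>v x = c \<cdot>\<^sub>v x"
  by (intro eq_vecI) auto

lemma poly_char_poly:
  assumes "A \<in> carrier_mat n n"
  shows "poly (char_poly A) lam = det (lam \<cdot>\<^sub>m 1\<^sub>m n - A)"
  unfolding char_poly_def
  by (rule poly_det_cong[of _ n]) (use assms in \<open>auto simp: char_poly_matrix_def\<close>)

(* Cramer's rule for \<open>(\<lambda>I - A) x = b\<close> with \<open>\<lambda>\<close> kept as the polynomial variable. *)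
definition cramer_numerator :: "'a::comm_ring_1 mat \<Rightarrow> 'a vec \<Rightarrow> nat \<Rightarrow> 'a poly" where
  "cramer_numerator A b j = det (replace_col (char_poly_matrix A) (map_vec (\<lambda>a. [:a:]) b) j)"

lemma degree_cramer_numerator:
  assumes "A \<in> carrier_mat n n" and "b \<in> carrier_vec n"
  shows "degree (cramer_numerator A b j) \<le> n"
proof -
  have "degree (cramer_numerator A b j) \<le> 1 * n"
    unfolding cramer_numerator_def
    by (rule degree_det_le) (use assms in \<open>auto simp: char_poly_matrix_def replace_col_def\<close>)
  then show ?thesis by simp
qed

lemma poly_cramer_numerator:
  assumes A: "A \<in> carrier_mat n n" and x: "x \<in> carrier_vec n" and j: "j < n"
  shows "poly (cramer_numerator A ((lam \<cdot>\<^sub>m 1\<^sub>m n - A) *\<^sub>v x) j) lam = x $ j * poly (char_poly A) lam"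
proof -
  have "poly (cramer_numerator A ((lam \<cdot>\<^sub>m 1\<^sub>m n - A) *\<^sub>v x) j) lam
      = det (replace_col (lam \<cdot>\<^sub>m 1\<^sub>m n - A) ((lam \<cdot>\<^sub>m 1\<^sub>m n - A) *\<^sub>v x) j)"
    unfolding cramer_numerator_def
    by (rule poly_det_cong[of _ n]) (use A x in \<open>auto simp: char_poly_matrix_def replace_col_def\<close>)
  also have "\<dots> = x $ j * det (lam \<cdot>\<^sub>m 1\<^sub>m n - A)"
    by (rule cramer_lemma_mat) (use A x j in auto)
  finally show ?thesis
    by (simp add: poly_char_poly[OF A])
qed

lemma mat_inverse_if_det_nonzero:
  fixes A :: "'a::field mat"
  assumes A: "A \<in> carrier_mat n n" and "det A \<noteq> 0"
  obtains B where "mat_inverse A = Some B" and "A * B = 1\<^sub>m n" and "B * A = 1\<^sub>m n"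
    and "B \<in> carrier_mat n n"
proof -
  have "A \<in> Units (ring_mat TYPE('a) n ())"
    by (rule det_non_zero_imp_unit[OF A assms(2)])
  then obtain B where "mat_inverse A = Some B"
    using mat_inverse(1)[OF A, of "()"] by blast
  with that show ?thesis
    using mat_inverse(2)[OF A] by blast
qed

lemma mult_mat_vec_eq_iff_inverse:
  fixes A B :: "'a::comm_ring_1 mat"
  assumes A: "A \<in> carrier_mat n n" and B: "B \<in> carrier_mat n n"
    and AB: "A * B = 1\<^sub>m n" and BA: "B * A = 1\<^sub>m n"
    and x: "x \<in> carrier_vec n" and b: "b \<in> carrier_vec n"
  shows "A *\<^sub>v x = b \<longleftrightarrow> x = B *\<^sub>v b"
proof
  assume "A *\<^sub>v x = b"
  then have "B *\<^sub>v b = (B * A) *\<^sub>v x"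
    using A B x by simp
  then show "x = B *\<^sub>v b"
    using BA x by simp
next
  assume "x = B *\<^sub>v b"
  then have "A *\<^sub>v x = (A * B) *\<^sub>v b"
    using A B b by simp
  then show "A *\<^sub>v x = b"
    using AB b by simp
qed

abbreviation D11c :: "(int \<Rightarrow> real) \<Rightarrow> nat \<Rightarrow> complex mat" where
  "D11c \<theta> N \<equiv> map_mat complex_of_real (D11 \<theta> N)"

abbreviation D12c :: "(int \<Rightarrow> real) \<Rightarrow> nat \<Rightarrow> complex vec" where
  "D12c \<theta> N \<equiv> map_vec complex_of_real (D12 \<theta> N)"

lemma dim_D11 [simp]: "dim_row (D11 \<theta> N) = N" "dim_col (D11 \<theta> N) = N"
  by (simp_all add: D11_def)

lemma dim_D12 [simp]: "dim_vec (D12 \<theta> N) = N"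
  by (simp add: D12_def)

lemma D11_carrier [simp]: "D11 \<theta> N \<in> carrier_mat N N"
  by (simp add: carrier_matI)

lemma D12_carrier [simp]: "D12 \<theta> N \<in> carrier_vec N"
  by (simp add: carrier_vecI)

(* Entry j of a node vector belongs to the node \<open>\<theta> (j - N)\<close>, as in D11; the node
  \<open>\<theta> 0 = 0\<close> is left out because there the collocation polynomial is normalised to 1. *)
definition node_values :: "(int \<Rightarrow> real) \<Rightarrow> nat \<Rightarrow> complex poly \<Rightarrow> complex vec" where
  "node_values \<theta> N p = vec N (\<lambda>j. poly p (of_real (\<theta> (int j - int N))))"

definition node_interpolant :: "(int \<Rightarrow> real) \<Rightarrow> nat \<Rightarrow> complex vec \<Rightarrow> complex poly" where
  "node_interpolant \<theta> N v =
     (\<Sum>j<N. Polynomial.smult (v $ j) (complex_lagrange_basis \<theta> N (int j - int N)))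
       + complex_lagrange_basis \<theta> N 0"

lemma dim_node_values [simp]: "dim_vec (node_values \<theta> N p) = N"
  by (simp add: node_values_def)

lemma node_values_carrier [simp]: "node_values \<theta> N p \<in> carrier_vec N"
  by (simp add: carrier_vecI)

lemma degree_node_interpolant: "degree (node_interpolant \<theta> N v) \<le> N"
  unfolding node_interpolant_def
  by (intro degree_add_le degree_sum_le order_trans[OF degree_smult_le] degree_complex_lagrange_basis) auto

lemma poly_node_interpolant:
  "poly (node_interpolant \<theta> N v) x
     = (\<Sum>j<N. v $ j * poly (complex_lagrange_basis \<theta> N (int j - int N)) x)
       + poly (complex_lagrange_basis \<theta> N 0) x"
  by (simp add: node_interpolant_def poly_sum)

lemma poly_node_interpolant_node:
  assumes inj: "inj_on \<theta> {-int N..0}" and k: "k \<in> {-int N..0}"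
  shows "poly (node_interpolant \<theta> N v) (of_real (\<theta> k)) = (if k = 0 then 1 else v $ nat (k + int N))"
proof -
  note basis_at_node = poly_complex_lagrange_basis_of_real poly_lagrange_basis_node[OF inj k]
  have "poly (node_interpolant \<theta> N v) (of_real (\<theta> k))
      = (\<Sum>j<N. if j = nat (k + int N) then v $ j else 0) + (if k = 0 then 1 else 0)"
    unfolding poly_node_interpolant
  proof (intro arg_cong2[where f = "(+)"] sum.cong refl)
    fix j assume "j \<in> {..<N}"
    then show "v $ j * poly (complex_lagrange_basis \<theta> N (int j - int N)) (of_real (\<theta> k))
        = (if j = nat (k + int N) then v $ j else 0)"
      using k by (auto simp: basis_at_node)
  qed (use k in \<open>simp add: basis_at_node\<close>)
  also have "\<dots> = (if k = 0 then 1 else v $ nat (k + int N))"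
    using k by auto
  finally show ?thesis .
qed

lemma node_values_node_interpolant:
  assumes "inj_on \<theta> {-int N..0}" and "v \<in> carrier_vec N"
  shows "node_values \<theta> N (node_interpolant \<theta> N v) = v"
  using assms by (intro eq_vecI) (auto simp: node_values_def poly_node_interpolant_node)

lemma poly_node_interpolant_0:
  assumes "inj_on \<theta> {-int N..0}" and "\<theta> 0 = 0"
  shows "poly (node_interpolant \<theta> N v) 0 = 1"
  using poly_node_interpolant_node[OF assms(1), of 0] assms(2) by simp

lemma node_interpolant_node_values:
  assumes inj: "inj_on \<theta> {-int N..0}" and "\<theta> 0 = 0" and deg: "degree p \<le> N" and "poly p 0 = 1"
  shows "node_interpolant \<theta> N (node_values \<theta> N p) = p"
proof -
  have "p = (\<Sum>k\<in>{-int N..0}. Polynomial.smult (poly p (of_real (\<theta> k))) (complex_lagrange_basis \<theta> N k))"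
    by (rule lagrange_expansion[OF inj deg])
  also have "\<dots> = node_interpolant \<theta> N (node_values \<theta> N p)"
    unfolding sum_nodes_split node_interpolant_def node_values_def using assms by simp
  finally show ?thesis by simp
qed

lemma pderiv_at_interior_node:
  assumes inj: "inj_on \<theta> {-int N..0}" and "\<theta> 0 = 0" and deg: "degree p \<le> N" and "poly p 0 = 1"
    and "j < N"
  shows "poly (pderiv p) (of_real (\<theta> (int j - int N)))
    = (D11c \<theta> N *\<^sub>v node_values \<theta> N p) $ j + D12c \<theta> N $ j"
  unfolding poly_pderiv_at_node[OF inj deg] sum_nodes_split
  using assms by (auto simp: D11_def D12_def node_values_def scalar_prod_def mult.commute
      lessThan_atLeast0 intro!: sum.cong)

lemma collocation_iff_linear_system:
  assumes "inj_on \<theta> {-int N..0}" and "\<theta> 0 = 0" and "degree p \<le> N" and "poly p 0 = 1"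
  shows "is_collocation_poly \<theta> N lam p
    \<longleftrightarrow> (lam \<cdot>\<^sub>m 1\<^sub>m N - D11c \<theta> N) *\<^sub>v node_values \<theta> N p = D12c \<theta> N"
proof -
  let ?P = "node_values \<theta> N p"
  have "(lam \<cdot>\<^sub>m 1\<^sub>m N - D11c \<theta> N) *\<^sub>v ?P = lam \<cdot>\<^sub>v ?P - D11c \<theta> N *\<^sub>v ?P"
    by (subst minus_mult_distrib_mat_vec[of _ N N]) (auto simp: smult_one_mult_mat_vec)
  then have row: "((lam \<cdot>\<^sub>m 1\<^sub>m N - D11c \<theta> N) *\<^sub>v ?P) $ j = lam * ?P $ j - (D11c \<theta> N *\<^sub>v ?P) $ j"
    if "j < N" for j
    using that by (simp del: index_mult_mat_vec)
  have "is_collocation_poly \<theta> N lam p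
      \<longleftrightarrow> (\<forall>j<N. (D11c \<theta> N *\<^sub>v ?P) $ j + D12c \<theta> N $ j = lam * ?P $ j)"
    unfolding is_collocation_poly_def ball_interior_nodes
    using assms by (simp add: pderiv_at_interior_node node_values_def del: index_mult_mat_vec)
  also have "\<dots> \<longleftrightarrow> (\<forall>j<N. ((lam \<cdot>\<^sub>m 1\<^sub>m N - D11c \<theta> N) *\<^sub>v ?P) $ j = D12c \<theta> N $ j)"
    by (auto simp: row algebra_simps simp del: index_mult_mat_vec)
  also have "\<dots> \<longleftrightarrow> (lam \<cdot>\<^sub>m 1\<^sub>m N - D11c \<theta> N) *\<^sub>v ?P = D12c \<theta> N"
    by (auto simp: vec_eq_iff D12_def simp del: index_mult_mat_vec)
  finally show ?thesis .
qed

lemma collocation_poly_iff: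
  assumes "inj_on \<theta> {-int N..0}" and "\<theta> 0 = 0"
  shows "is_collocation_poly \<theta> N lam p
    \<longleftrightarrow> (\<exists>v\<in>carrier_vec N. (lam \<cdot>\<^sub>m 1\<^sub>m N - D11c \<theta> N) *\<^sub>v v = D12c \<theta> N \<and> p = node_interpolant \<theta> N v)"
proof
  assume col: "is_collocation_poly \<theta> N lam p"
  then have "degree p \<le> N" and "poly p 0 = 1"
    by (simp_all add: is_collocation_poly_def)
  with assms col show "\<exists>v\<in>carrier_vec N. (lam \<cdot>\<^sub>m 1\<^sub>m N - D11c \<theta> N) *\<^sub>v v = D12c \<theta> N \<and> p = node_interpolant \<theta> N v"
    by (intro bexI[of _ "node_values \<theta> N p"])
      (simp_all add: collocation_iff_linear_system node_interpolant_node_values)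
next
  assume "\<exists>v\<in>carrier_vec N. (lam \<cdot>\<^sub>m 1\<^sub>m N - D11c \<theta> N) *\<^sub>v v = D12c \<theta> N \<and> p = node_interpolant \<theta> N v"
  then obtain v where "v \<in> carrier_vec N" and "(lam \<cdot>\<^sub>m 1\<^sub>m N - D11c \<theta> N) *\<^sub>v v = D12c \<theta> N"
    and "p = node_interpolant \<theta> N v"
    by blast
  with assms show "is_collocation_poly \<theta> N lam p"
    by (simp add: collocation_iff_linear_system degree_node_interpolant poly_node_interpolant_0
        node_values_node_interpolant)
qed

definition collocation_numerator :: "(int \<Rightarrow> real) \<Rightarrow> nat \<Rightarrow> complex \<Rightarrow> complex poly" where
  "collocation_numerator \<theta> N x =
     (\<Sum>j<N. Polynomial.smult (poly (complex_lagrange_basis \<theta> N (int j - int N)) x)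
        (cramer_numerator (D11c \<theta> N) (D12c \<theta> N) j))
     + Polynomial.smult (poly (complex_lagrange_basis \<theta> N 0) x) (char_poly (D11c \<theta> N))"

lemma degree_collocation_numerator: "degree (collocation_numerator \<theta> N x) \<le> N"
proof -
  have "degree (char_poly (D11c \<theta> N)) = N"
    using degree_monic_char_poly[of "D11c \<theta> N" N] by simp
  then show ?thesis
    unfolding collocation_numerator_def
    by (intro degree_add_le degree_sum_le order_trans[OF degree_smult_le] degree_cramer_numerator) auto
qed

lemma poly_collocation_numerator:
  assumes "inj_on \<theta> {-int N..0}" and "\<theta> 0 = 0" and "is_collocation_poly \<theta> N lam p"
  shows "poly (collocation_numerator \<theta> N x) lam = poly p x * poly (char_poly (D11c \<theta> N)) lam"
proof -
  obtain v where v: "v \<in> carrier_vec N" and sys: "(lam \<cdot>\<^sub>m 1\<^sub>m N - D11c \<theta> N) *\<^sub>v v = D12c \<theta> N"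
    and p: "p = node_interpolant \<theta> N v"
    using assms collocation_poly_iff by blast
  have "poly (cramer_numerator (D11c \<theta> N) (D12c \<theta> N) j) lam = v $ j * poly (char_poly (D11c \<theta> N)) lam"
    if "j < N" for j
    using poly_cramer_numerator[of "D11c \<theta> N" N v j lam] v that sys by simp
  then show ?thesis
    unfolding collocation_numerator_def p poly_node_interpolant
    by (simp add: poly_sum algebra_simps sum_distrib_left)
qed

lemma unique_collocation_poly:
  assumes inj: "inj_on \<theta> {-int N..0}" and \<theta>0: "\<theta> 0 = 0"
    and not_eig: "\<not> eigenvalue (D11c \<theta> N) lam"
  shows "mat_inverse (lam \<cdot>\<^sub>m 1\<^sub>m N - D11c \<theta> N) \<noteq> None"
    and "\<exists>!p. is_collocation_poly \<theta> N lam p"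
    and "is_collocation_poly \<theta> N lam p \<Longrightarrow>
      node_values \<theta> N p = the (mat_inverse (lam \<cdot>\<^sub>m 1\<^sub>m N - D11c \<theta> N)) *\<^sub>v D12c \<theta> N"
proof -
  let ?A = "lam \<cdot>\<^sub>m 1\<^sub>m N - D11c \<theta> N"
  have M: "D11c \<theta> N \<in> carrier_mat N N"
    by simp
  have A: "?A \<in> carrier_mat N N"
    by (rule minus_carrier_mat[OF M])
  have "det ?A \<noteq> 0"
    using not_eig eigenvalue_root_char_poly[OF M] by (simp add: poly_char_poly[OF M])
  then obtain B where inv: "mat_inverse ?A = Some B" and AB: "?A * B = 1\<^sub>m N"
    and BA: "B * ?A = 1\<^sub>m N" and B: "B \<in> carrier_mat N N"
    by (rule mat_inverse_if_det_nonzero[OF A])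
  have d: "D12c \<theta> N \<in> carrier_vec N"
    by simp
  have "?A *\<^sub>v v = D12c \<theta> N \<longleftrightarrow> v = B *\<^sub>v D12c \<theta> N" if "v \<in> carrier_vec N" for v
    by (rule mult_mat_vec_eq_iff_inverse[OF A B AB BA that d])
  then have colloc: "is_collocation_poly \<theta> N lam q \<longleftrightarrow> q = node_interpolant \<theta> N (B *\<^sub>v D12c \<theta> N)" for q
    unfolding collocation_poly_iff[OF inj \<theta>0] using B by auto
  show "mat_inverse ?A \<noteq> None"
    using inv by simp
  show "\<exists>!p. is_collocation_poly \<theta> N lam p"
    using colloc by simp
  show "node_values \<theta> N p = the (mat_inverse ?A) *\<^sub>v D12c \<theta> N" if "is_collocation_poly \<theta> N lam p"
    using that colloc inv B by (simp add: node_values_node_interpolant[OF inj])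
qed

theorem proposition3:
  fixes N m :: nat and \<tau> :: "nat \<Rightarrow> real" and \<theta> :: "int \<Rightarrow> real"
  assumes "N \<ge> 1" and "m \<ge> 1"
    and "\<forall>i\<in>{1..m}. \<tau> i > 0"
    and "inj_on \<theta> {-int N..0}"
    and "\<forall>i\<in>{-int N..0}. - Max (\<tau> ` {1..m}) \<le> \<theta> i \<and> \<theta> i \<le> 0"
    and "\<theta> 0 = 0"
  shows "\<exists>(s :: complex poly) (r :: nat \<Rightarrow> complex poly).
     degree s = N \<and> lead_coeff s = 1 \<and>
     (\<forall>i\<in>{1..m}. degree (r i) \<le> N) \<and>
     (\<forall>lam. poly s lam = det (lam \<cdot>\<^sub>m 1\<^sub>m N - map_mat complex_of_real (D11 \<theta> N))) \<and>
     (\<forall>lam. \<not> eigenvalue (map_mat complex_of_real (D11 \<theta> N)) lam \<longrightarrow>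
        (\<exists>!p. is_collocation_poly \<theta> N lam p) \<and>
        (\<forall>p. is_collocation_poly \<theta> N lam p \<longrightarrow>
           (\<forall>i\<in>{1..m}. poly p (of_real (- \<tau> i)) = poly (r i) lam / poly s lam) \<and>
           mat_inverse (lam \<cdot>\<^sub>m 1\<^sub>m N - map_mat complex_of_real (D11 \<theta> N)) \<noteq> None \<and>
           vec N (\<lambda>j. poly p (of_real (\<theta> (int j - int N)))) =
             the (mat_inverse (lam \<cdot>\<^sub>m 1\<^sub>m N - map_mat complex_of_real (D11 \<theta> N)))
               *\<^sub>v map_vec complex_of_real (D12 \<theta> N)))"
proof -
  note inj = assms(4) and \<theta>0 = assms(6)
  let ?M = "D11c \<theta> N"
  have M: "?M \<in> carrier_mat N N"
    by simp
  define s where "s = char_poly ?M"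
  define r where "r i = collocation_numerator \<theta> N (of_real (- \<tau> i))" for i
  have ratio: "poly p (of_real (- \<tau> i)) = poly (r i) lam / poly s lam"
    if "\<not> eigenvalue ?M lam" and "is_collocation_poly \<theta> N lam p" for lam p i
  proof -
    have "poly s lam \<noteq> 0"
      using that(1) eigenvalue_root_char_poly[OF M] by (simp add: s_def)
    then show ?thesis
      using poly_collocation_numerator[OF inj \<theta>0 that(2)] by (simp add: r_def s_def)
  qed
  show ?thesis
    using degree_monic_char_poly[OF M] degree_collocation_numerator poly_char_poly[OF M]
      ratio unique_collocation_poly[OF inj \<theta>0]
    by (intro exI[of _ s] exI[of _ r]) (auto simp: s_def r_def node_values_def)
qed

end
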